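(* Let $\varepsilon>0$, $\Omega\subset\mathbb{R}^2$ bounded open, $u\in\mathcal{SF}_\varepsilon(\Omega)$, $R\in\mathcal{R}_\varepsilon(u)$ and $T\in\mathcal{T}_\varepsilon$ with $T\subset R$. Then: (a) if $T$ has exactly one edge in $\mathcal{N}_\varepsilon(u)$, then $T$ contains at least one boundary edge of $R$; (b) if $T$ has exactly one edge in $\mathcal{N}_\varepsilon(u)$ and $u(\mathcal{L}_\varepsilon(R))$ contains four points, then $T$ contains two boundary edges of $R$.
   Context: $\mathcal{L}=\{ae_1+b\hat e_2:a,b\in\mathbb{Z}\}$ with $e_1=(1,0)$, $\hat e_2=\frac12(1,\sqrt3)$, $\mathcal{L}_\varepsilon=\varepsilon\mathcal{L}$, $\mathcal{L}_\varepsilon(R)=\mathcal{L}_\varepsilon\cap R$; $\mathcal{T}_\varepsilon$ is the set of closed triangles with vertices in $\mathcal{L}_\varepsilon$ pairwise at distance $\varepsilon$; $\mathcal{E}_\varepsilon$ the set of segments $[i,j]$, $i,j\in\mathcal{L}_\varepsilon$, $|i-j|=\varepsilon$. $n=(0,0,1)$; $\mathcal{SF}_\varepsilon(\Omega)$ is the set of $u:\mathcal{L}_\varepsilon\to\mathbb{S}^2$ with $u=n$ on $\mathcal{L}_\varepsilon\setminus\Omega$. $\mathcal{N}_\varepsilon(u)=\{[i,j]\in\mathcal{E}_\varepsilon:u(i)=-u(j)\}$, $\mathcal{C}_\varepsilon(u)=\mathcal{E}_\varepsilon\setminus\mathcal{N}_\varepsilon(u)$. Two triangles of $\mathcal{T}_\varepsilon$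 are neighbours if their intersection is an edge in $\mathcal{N}_\varepsilon(u)$, and connected if joined by a finite chain of consecutive neighbours. $\mathcal{R}_\varepsilon(u)$ is the set of admissible interpolation regions: unions of pairwise connected triangles of $\mathcal{T}_\varepsilon$ that are maximal with respect to inclusion. A boundary edge of $R$ is an edge $[i,j]\in\mathcal{C}_\varepsilon(u)$ which is the common edge of a triangle $T\subseteq R$ and a triangle $T'\in\mathcal{T}_\varepsilon$ with $T'\subseteq\mathbb{R}^2\setminus\mathrm{int}(R)$. *)

theory Defs
  imports "HOL-Analysis.Analysis"
begin

definition e1 :: "real^2" where "e1 = vector [1, 0]"
definition e2hat :: "real^2" where "e2hat = vector [1/2, sqrt 3 / 2]"

definition lat :: "real \<Rightarrow> (real^2) set" where
  "lat eps = {eps *\<^sub>R (of_int a *\<^sub>R e1 + of_int b *\<^sub>R e2hat) | a b :: int. True}"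

definition tri :: "real \<Rightarrow> (real^2) set set" where
  "tri eps = {convex hull {i, j, k} | i j k. i \<in> lat eps \<and> j \<in> lat eps \<and> k \<in> lat eps
       \<and> dist i j = eps \<and> dist j k = eps \<and> dist i k = eps}"

definition edg :: "real \<Rightarrow> (real^2) set set" where
  "edg eps = {closed_segment i j | i j. i \<in> lat eps \<and> j \<in> lat eps \<and> dist i j = eps}"

definition npole :: "real^3" where "npole = vector [0, 0, 1]"

text \<open>SF_eps(Omega): spin fields u : L_eps -> S^2 with u = n on L_eps minus Omega
  (values of u off the lattice are irrelevant).\<close>
definition SF :: "real \<Rightarrow> (real^2) set \<Rightarrow> ((real^2) \<Rightarrow> real^3) set" where
  "SF eps \<Omega> = {u. (\<forall>i \<in> lat eps. u i \<in> sphere 0 1) \<and> (\<forall>i \<in> lat eps - \<Omega>. u i = npole)}"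

definition Nedg :: "real \<Rightarrow> ((real^2) \<Rightarrow> real^3) \<Rightarrow> (real^2) set set" where
  "Nedg eps u = {closed_segment i j | i j. i \<in> lat eps \<and> j \<in> lat eps \<and> dist i j = eps
       \<and> u i = - u j}"

definition Cedg :: "real \<Rightarrow> ((real^2) \<Rightarrow> real^3) \<Rightarrow> (real^2) set set" where
  "Cedg eps u = edg eps - Nedg eps u"

definition neighbours :: "real \<Rightarrow> ((real^2) \<Rightarrow> real^3) \<Rightarrow> (real^2) set \<Rightarrow> (real^2) set \<Rightarrow> bool" where
  "neighbours eps u T T' \<longleftrightarrow> T \<in> tri eps \<and> T' \<in> tri eps \<and> T \<inter> T' \<in> Nedg eps u"

definition tconnected :: "real \<Rightarrow> ((real^2) \<Rightarrow> real^3) \<Rightarrow> (real^2) set \<Rightarrow> (real^2) set \<Rightarrow> bool" where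
  "tconnected eps u T T' \<longleftrightarrow> T \<in> tri eps \<and> T' \<in> tri eps \<and> (neighbours eps u)\<^sup>*\<^sup>* T T'"

definition pw_connected :: "real \<Rightarrow> ((real^2) \<Rightarrow> real^3) \<Rightarrow> (real^2) set set \<Rightarrow> bool" where
  "pw_connected eps u S \<longleftrightarrow> S \<subseteq> tri eps \<and> (\<forall>T \<in> S. \<forall>T' \<in> S. tconnected eps u T T')"

definition regions :: "real \<Rightarrow> ((real^2) \<Rightarrow> real^3) \<Rightarrow> (real^2) set set" where
  "regions eps u = {R. \<exists>S. pw_connected eps u S \<and> R = \<Union>S \<and>
       (\<forall>S'. pw_connected eps u S' \<and> R \<subseteq> \<Union>S' \<longrightarrow> \<Union>S' = R)}"

definition bdry_edge :: "real \<Rightarrow> ((real^2) \<Rightarrow> real^3) \<Rightarrow> (real^2) set \<Rightarrow> (real^2) set \<Rightarrow> bool" where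
  "bdry_edge eps u R e \<longleftrightarrow> e \<in> Cedg eps u \<and>
     (\<exists>T T'. T \<in> tri eps \<and> T \<subseteq> R \<and> T' \<in> tri eps \<and> T' \<subseteq> - interior R \<and> T \<inter> T' = e)"

end

theory Submission
  imports Defs
begin

(* A triangle has at most two
   neighbours, since three N-edges would force u(c) = -u(c); so the triangles of an interpolation
   region form a path or a cycle, and at most two of them have fewer than two neighbours.
   Let T = abc have the single N-edge ab, so that u(c) is neither u(a) nor -u(a). Crossing N-edges
   only ever produces further N-edges between u(a) and -u(a), hence a triangle of the region with
   a vertex whose value is not \<plusminus>u(a) has at most one neighbour. This applies to T and to the
   reflections of T across bc and across ac, which all contain c, so the two reflections do not
   both lie in the region. A reflection outside the region lies outside its interior, which makes
   the corresponding edge of T a boundary edge. If the reflection across bc lies in the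
   region, its third vertex carries u(a), and a lattice point with a fourth value would give a
   third triangle with at most one neighbour; so when u takes four values on R, both bc and ac
   are boundary edges. *)

section \<open>Lattice coordinates\<close>

definition lat_pt :: "real \<Rightarrow> real \<Rightarrow> real \<Rightarrow> real^2" where
  "lat_pt eps s t = eps *\<^sub>R (s *\<^sub>R e1 + t *\<^sub>R e2hat)"

lemma lat_pt_nth [simp]:
  "lat_pt eps s t $ 1 = eps * (s + t / 2)"
  "lat_pt eps s t $ 2 = eps * t * sqrt 3 / 2"
  by (simp_all add: lat_pt_def e1_def e2hat_def algebra_simps)

lemma lat_pt_add: "lat_pt eps s t + lat_pt eps s' t' = lat_pt eps (s + s') (t + t')"
  by (simp add: vec_eq_iff forall_2 algebra_simps)

lemma lat_pt_diff: "lat_pt eps s t - lat_pt eps s' t' = lat_pt eps (s - s') (t - t')"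
  by (simp add: vec_eq_iff forall_2 field_simps)

lemma norm_lat_pt_sq: "norm (lat_pt eps s t) ^ 2 = eps ^ 2 * (s ^ 2 + s * t + t ^ 2)"
  by (simp only: power2_norm_eq_inner)
    (simp add: inner_vec_def sum_2 power2_eq_square algebra_simps)

definition eisenstein_norm :: "int \<Rightarrow> int \<Rightarrow> int" where
  "eisenstein_norm s t = s ^ 2 + s * t + t ^ 2"

lemma int_sq_le_1: "(t::int) ^ 2 \<le> 1 \<Longrightarrow> t \<in> {-1, 0, 1}"
  by (auto simp: abs_square_le_1 abs_le_iff)

lemma eisenstein_norm_eq_1_iff:
  "eisenstein_norm s t = 1 \<longleftrightarrow> (s, t) \<in> {(1,0), (-1,0), (0,1), (0,-1), (1,-1), (-1,1)}"
proof
  assume Q: "eisenstein_norm s t = 1"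
  have "(2 * s + t) ^ 2 + 3 * t ^ 2 = 4" "(2 * t + s) ^ 2 + 3 * s ^ 2 = 4"
    using Q by (simp_all add: eisenstein_norm_def power2_eq_square algebra_simps)
  then have "t ^ 2 \<le> 1" "s ^ 2 \<le> 1"
    using zero_le_power2[of "2 * s + t"] zero_le_power2[of "2 * t + s"] by linarith+
  then have "t \<in> {-1, 0, 1}" "s \<in> {-1, 0, 1}"
    by (simp_all only: int_sq_le_1)
  with Q show "(s, t) \<in> {(1,0), (-1,0), (0,1), (0,-1), (1,-1), (-1,1)}"
    by (auto simp: eisenstein_norm_def)
next
  assume "(s, t) \<in> {(1,0), (-1,0), (0,1), (0,-1), (1,-1), (-1,1)}"
  then show "eisenstein_norm s t = 1" by (elim insertE emptyE; simp add: eisenstein_norm_def)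
qed

lemma unit_triangle_int_cases:
  assumes "eisenstein_norm p1 p2 = 1" "eisenstein_norm q1 q2 = 1"
    and "eisenstein_norm (q1 - p1) (q2 - p2) = 1"
  obtains m n where "{(0, 0), (p1, p2), (q1, q2)} = {(m, n), (m + 1, n), (m, n + 1)}"
    | m n where "{(0, 0), (p1, p2), (q1, q2)} = {(m + 1, n), (m, n + 1), (m + 1, n + 1)}"
proof -
  from assms(1,2)[unfolded eisenstein_norm_eq_1_iff] assms(3)
  have "\<exists>m n. {(0, 0), (p1, p2), (q1, q2)} = {(m, n), (m + 1, n), (m, n + 1)}
      \<or> {(0, 0), (p1, p2), (q1, q2)} = {(m + 1, n), (m, n + 1), (m + 1, n + 1)}"
    apply (simp only: insert_iff prod.inject empty_iff simp_thms)
    apply (elim disjE conjE; simp add: eisenstein_norm_def)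
    apply (rule exI[of _ "min 0 (min p1 q1)"], rule exI[of _ "min 0 (min p2 q2)"],
        simp add: insert_commute)+
    done
  then show thesis
    using that by (elim exE disjE) assumption+
qed

lemma unit_triangle_int_det_nonzero:
  assumes "eisenstein_norm p1 p2 = 1" "eisenstein_norm q1 q2 = 1"
    and "eisenstein_norm (q1 - p1) (q2 - p2) = 1"
  shows "p1 * q2 - p2 * q1 \<noteq> 0"
  using assms(1,2)[unfolded eisenstein_norm_eq_1_iff] assms(3)
  by (simp only: insert_iff prod.inject empty_iff simp_thms)
    (elim disjE conjE; simp add: eisenstein_norm_def)

lemma unit_triangle_int_apex:
  assumes "eisenstein_norm d1 d2 = 1"
    and "eisenstein_norm p1 p2 = 1" "eisenstein_norm (p1 - d1) (p2 - d2) = 1"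
    and "eisenstein_norm q1 q2 = 1" "eisenstein_norm (q1 - d1) (q2 - d2) = 1"
  shows "(p1, p2) = (q1, q2) \<or> (p1, p2) = (d1 - q1, d2 - q2)"
  using assms(1,2,4)[unfolded eisenstein_norm_eq_1_iff] assms(3,5)
  by (simp only: insert_iff prod.inject empty_iff simp_thms)
    (elim disjE conjE; simp add: eisenstein_norm_def)

lemma mem_lat_iff: "z \<in> lat eps \<longleftrightarrow> (\<exists>(a::int) (b::int). z = lat_pt eps a b)"
  unfolding lat_def lat_pt_def by auto

lemma lat_add_diff:
  assumes "i \<in> lat eps" "j \<in> lat eps" "k \<in> lat eps"
  shows "i + j - k \<in> lat eps"
proof -
  obtain a b c d e f :: int where "i = lat_pt eps a b" "j = lat_pt eps c d" "k = lat_pt eps e f"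
    using assms unfolding mem_lat_iff by metis
  then have "i + j - k = lat_pt eps (of_int (a + c - e)) (of_int (b + d - f))"
    by (simp add: lat_pt_add lat_pt_diff)
  then show ?thesis
    unfolding mem_lat_iff by blast
qed

lemma dist_lat_pt_eq_iff:
  assumes "eps > 0"
  shows "dist (lat_pt eps a b) (lat_pt eps c d) = eps \<longleftrightarrow> eisenstein_norm (c - a) (d - b) = 1"
proof -
  have "dist (lat_pt eps a b) (lat_pt eps c d) = norm (lat_pt eps (c - a) (d - b))"
    by (subst dist_commute) (simp add: dist_norm lat_pt_diff)
  then have "dist (lat_pt eps a b) (lat_pt eps c d) = eps
      \<longleftrightarrow> norm (lat_pt eps (c - a) (d - b)) ^ 2 = eps ^ 2"
    using assms by (metis norm_ge_zero power2_eq_imp_eq less_imp_le)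
  also have "\<dots> \<longleftrightarrow> eps ^ 2 * of_int (eisenstein_norm (c - a) (d - b)) = eps ^ 2 * 1"
    by (simp add: norm_lat_pt_sq eisenstein_norm_def)
  finally show ?thesis
    using assms by simp
qed

section \<open>Unit triangles of the lattice\<close>

definition lat_tri :: "real \<Rightarrow> real^2 \<Rightarrow> real^2 \<Rightarrow> real^2 \<Rightarrow> bool" where
  "lat_tri eps a b c \<longleftrightarrow> a \<in> lat eps \<and> b \<in> lat eps \<and> c \<in> lat eps
     \<and> dist a b = eps \<and> dist b c = eps \<and> dist a c = eps"

lemma mem_tri_iff: "X \<in> tri eps \<longleftrightarrow> (\<exists>a b c. X = convex hull {a, b, c} \<and> lat_tri eps a b c)"
  unfolding tri_def lat_tri_def by auto

lemma lat_tri_coords: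
  assumes "eps > 0" "lat_tri eps a b c"
  obtains a1 a2 p1 p2 q1 q2 :: int where "a = lat_pt eps a1 a2"
    "b = lat_pt eps (a1 + p1) (a2 + p2)" "c = lat_pt eps (a1 + q1) (a2 + q2)"
    "eisenstein_norm p1 p2 = 1" "eisenstein_norm q1 q2 = 1"
    "eisenstein_norm (q1 - p1) (q2 - p2) = 1"
proof -
  obtain a1 a2 b1 b2 c1 c2 :: int where abc: "a = lat_pt eps a1 a2" "b = lat_pt eps b1 b2"
    "c = lat_pt eps c1 c2"
    using assms(2) unfolding lat_tri_def mem_lat_iff by metis
  have "eisenstein_norm (b1 - a1) (b2 - a2) = 1" "eisenstein_norm (c1 - a1) (c2 - a2) = 1"
    "eisenstein_norm ((c1 - a1) - (b1 - a1)) ((c2 - a2) - (b2 - a2)) = 1"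
    using assms(2) unfolding lat_tri_def abc by (simp_all add: dist_lat_pt_eq_iff[OF assms(1)])
  with that[of a1 a2 "b1 - a1" "b2 - a2" "c1 - a1" "c2 - a2"] show thesis
    unfolding abc by simp
qed

lemma lat_tri_distinct: "eps > 0 \<Longrightarrow> lat_tri eps a b c \<Longrightarrow> a \<noteq> b \<and> b \<noteq> c \<and> a \<noteq> c"
  unfolding lat_tri_def by auto

lemma lat_tri_commute: "lat_tri eps a b c \<Longrightarrow> lat_tri eps b a c"
  unfolding lat_tri_def by (auto simp: dist_commute)

lemma lat_tri_rotate: "lat_tri eps a b c \<Longrightarrow> lat_tri eps b c a"
  unfolding lat_tri_def by (auto simp: dist_commute)

lemma lat_tri_perm:
  assumes "lat_tri eps a b c" "{i, j, k} = {a, b, c}" "i \<noteq> j" "j \<noteq> k" "i \<noteq> k"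
  shows "lat_tri eps i j k"
proof -
  have lat: "x \<in> lat eps" if "x \<in> {a, b, c}" for x
    using assms(1) that unfolding lat_tri_def by auto
  have dist: "dist x y = eps" if "x \<in> {a, b, c}" "y \<in> {a, b, c}" "x \<noteq> y" for x y
    using assms(1) that unfolding lat_tri_def by (auto simp: dist_commute)
  have ijk: "i \<in> {a, b, c}" "j \<in> {a, b, c}" "k \<in> {a, b, c}"
    using assms(2) by blast+
  show ?thesis
    unfolding lat_tri_def using lat[OF ijk(1)] lat[OF ijk(2)] lat[OF ijk(3)]
      dist[OF ijk(1,2) assms(3)] dist[OF ijk(2,3) assms(4)] dist[OF ijk(1,3) assms(5)] by blast
qed

lemma lat_tri_reflect:
  assumes "lat_tri eps i j k"
  shows "lat_tri eps i j (i + j - k)"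
proof -
  have "dist j (i + j - k) = dist i k" "dist i (i + j - k) = dist j k"
    by (simp_all add: dist_norm norm_minus_commute algebra_simps)
  then show ?thesis
    using assms lat_add_diff unfolding lat_tri_def by simp
qed

lemma lat_tri_vertex_notin_segment:
  assumes "eps > 0" "lat_tri eps a b c"
  shows "c \<notin> closed_segment a b"
proof
  assume "c \<in> closed_segment a b"
  then have "dist a b = dist a c + dist c b"
    by (metis between between_mem_segment)
  with assms show False
    unfolding lat_tri_def by (simp add: dist_commute)
qed

definition up_verts :: "real \<Rightarrow> int \<Rightarrow> int \<Rightarrow> (real^2) set" where
  "up_verts eps m n = {lat_pt eps m n, lat_pt eps (m + 1) n, lat_pt eps m (n + 1)}"

definition down_verts :: "real \<Rightarrow> int \<Rightarrow> int \<Rightarrow> (real^2) set" where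
  "down_verts eps m n = {lat_pt eps (m + 1) n, lat_pt eps m (n + 1), lat_pt eps (m + 1) (n + 1)}"

lemma lat_tri_cases:
  assumes "eps > 0" "lat_tri eps a b c"
  obtains m n where "{a, b, c} = up_verts eps m n" | m n where "{a, b, c} = down_verts eps m n"
proof -
  obtain a1 a2 p1 p2 q1 q2 :: int where abc: "a = lat_pt eps a1 a2"
    "b = lat_pt eps (a1 + p1) (a2 + p2)" "c = lat_pt eps (a1 + q1) (a2 + q2)"
    and Q: "eisenstein_norm p1 p2 = 1" "eisenstein_norm q1 q2 = 1"
    "eisenstein_norm (q1 - p1) (q2 - p2) = 1"
    using lat_tri_coords[OF assms] .
  define f where "f = (\<lambda>(s :: int, t :: int). lat_pt eps (a1 + s) (a2 + t))"
  have "{a, b, c} = f ` {(0, 0), (p1, p2), (q1, q2)}"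
    unfolding f_def abc by simp
  show thesis
  proof (cases rule: unit_triangle_int_cases[OF Q])
    case (1 m n)
    note \<open>{a, b, c} = f ` {(0, 0), (p1, p2), (q1, q2)}\<close>
    also have "f ` {(0, 0), (p1, p2), (q1, q2)} = f ` {(m, n), (m + 1, n), (m, n + 1)}"
      using 1 by (rule arg_cong)
    also have "\<dots> = up_verts eps (a1 + m) (a2 + n)"
      unfolding f_def up_verts_def by (simp add: add.assoc)
    finally show thesis by (rule that(1))
  next
    case (2 m n)
    note \<open>{a, b, c} = f ` {(0, 0), (p1, p2), (q1, q2)}\<close>
    also have "f ` {(0, 0), (p1, p2), (q1, q2)} = f ` {(m + 1, n), (m, n + 1), (m + 1, n + 1)}"
      using 2 by (rule arg_cong)
    also have "\<dots> = down_verts eps (a1 + m) (a2 + n)"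
      unfolding f_def down_verts_def by (simp add: add.assoc)
    finally show thesis by (rule that(2))
  qed
qed

definition lat_s :: "real \<Rightarrow> real^2 \<Rightarrow> real" where
  "lat_s eps z = z $ 1 / eps - z $ 2 / (eps * sqrt 3)"

definition lat_t :: "real \<Rightarrow> real^2 \<Rightarrow> real" where
  "lat_t eps z = 2 * z $ 2 / (eps * sqrt 3)"

lemma lat_s_lat_pt [simp]: "eps > 0 \<Longrightarrow> lat_s eps (lat_pt eps s t) = s"
  by (simp add: lat_s_def field_simps)

lemma lat_t_lat_pt [simp]: "eps > 0 \<Longrightarrow> lat_t eps (lat_pt eps s t) = t"
  by (simp add: lat_t_def field_simps)

lemma lat_s_add [simp]: "lat_s eps (x + y) = lat_s eps x + lat_s eps y"
  and lat_s_diff [simp]: "lat_s eps (x - y) = lat_s eps x - lat_s eps y"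
  and lat_s_scaleR [simp]: "lat_s eps (r *\<^sub>R x) = r * lat_s eps x"
  by (simp_all add: lat_s_def add_divide_distrib diff_divide_distrib right_diff_distrib)

lemma lat_t_add [simp]: "lat_t eps (x + y) = lat_t eps x + lat_t eps y"
  and lat_t_diff [simp]: "lat_t eps (x - y) = lat_t eps x - lat_t eps y"
  and lat_t_scaleR [simp]: "lat_t eps (r *\<^sub>R x) = r * lat_t eps x"
  by (simp_all add: lat_t_def add_divide_distrib diff_divide_distrib right_diff_distrib)

lemma hull_up_verts_coords:
  assumes "eps > 0" "z \<in> convex hull (up_verts eps m n)"
  shows "m \<le> lat_s eps z \<and> n \<le> lat_t eps z \<and> lat_s eps z + lat_t eps z \<le> m + n + 1"
proof -
  obtain u v w where uvw: "0 \<le> u" "0 \<le> v" "0 \<le> w" "u + v + w = 1"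
    "z = u *\<^sub>R lat_pt eps m n + v *\<^sub>R lat_pt eps (m + 1) n + w *\<^sub>R lat_pt eps m (n + 1)"
    using assms(2) unfolding up_verts_def convex_hull_3 by blast
  have "lat_s eps z = (u + v + w) * m + v" "lat_t eps z = (u + v + w) * n + w"
    unfolding uvw(5) using assms(1) by (simp_all add: algebra_simps)
  with uvw show ?thesis by simp
qed

lemma hull_down_verts_coords:
  assumes "eps > 0" "z \<in> convex hull (down_verts eps m n)"
  shows "lat_s eps z \<le> m + 1 \<and> lat_t eps z \<le> n + 1 \<and> m + n + 1 \<le> lat_s eps z + lat_t eps z"
proof -
  obtain u v w where uvw: "0 \<le> u" "0 \<le> v" "0 \<le> w" "u + v + w = 1"
    "z = u *\<^sub>R lat_pt eps (m + 1) n + v *\<^sub>R lat_pt eps m (n + 1) + w *\<^sub>R lat_pt eps (m + 1) (n + 1)"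
    using assms(2) unfolding down_verts_def convex_hull_3 by blast
  have "lat_s eps z = (u + v + w) * (m + 1) - v" "lat_t eps z = (u + v + w) * (n + 1) - u"
    unfolding uvw(5) using assms(1) by (simp_all add: algebra_simps)
  with uvw show ?thesis by simp
qed

lemma lat_mem_hull_up_verts:
  assumes "eps > 0" "z \<in> lat eps" "z \<in> convex hull (up_verts eps m n)"
  shows "z \<in> up_verts eps m n"
proof -
  obtain p q :: int where z: "z = lat_pt eps p q"
    using assms(2) unfolding mem_lat_iff by blast
  have "m \<le> p \<and> n \<le> q \<and> p + q \<le> m + n + 1"
    using hull_up_verts_coords[OF assms(1,3)] assms(1) unfolding z by simp
  then have "(p, q) \<in> {(m, n), (m + 1, n), (m, n + 1)}"
    by auto
  then show ?thesis
    unfolding z up_verts_def by auto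
qed

lemma lat_mem_hull_down_verts:
  assumes "eps > 0" "z \<in> lat eps" "z \<in> convex hull (down_verts eps m n)"
  shows "z \<in> down_verts eps m n"
proof -
  obtain p q :: int where z: "z = lat_pt eps p q"
    using assms(2) unfolding mem_lat_iff by blast
  have "p \<le> m + 1 \<and> q \<le> n + 1 \<and> m + n + 1 \<le> p + q"
    using hull_down_verts_coords[OF assms(1,3)] assms(1) unfolding z by simp
  then have "(p, q) \<in> {(m + 1, n), (m, n + 1), (m + 1, n + 1)}"
    by auto
  then show ?thesis
    unfolding z down_verts_def by auto
qed

lemma lat_mem_hull_lat_tri:
  assumes "eps > 0" "lat_tri eps a b c" "z \<in> lat eps" "z \<in> convex hull {a, b, c}"
  shows "z \<in> {a, b, c}"
  using assms(2,4) lat_mem_hull_up_verts[OF assms(1,3)] lat_mem_hull_down_verts[OF assms(1,3)]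
  by (cases rule: lat_tri_cases[OF assms(1,2)]) simp_all

lemma lat_tri_common_edge:
  assumes "eps > 0" "lat_tri eps a b c" "lat_tri eps a b y"
  shows "y = c \<or> y = a + b - c"
proof -
  obtain a1 a2 p1 p2 q1 q2 :: int where abc: "a = lat_pt eps a1 a2"
    "b = lat_pt eps (a1 + p1) (a2 + p2)" "c = lat_pt eps (a1 + q1) (a2 + q2)"
    and Q: "eisenstein_norm p1 p2 = 1" "eisenstein_norm q1 q2 = 1"
    "eisenstein_norm (q1 - p1) (q2 - p2) = 1"
    using lat_tri_coords[OF assms(1,2)] .
  obtain y1 y2 :: int where y: "y = lat_pt eps y1 y2"
    using assms(3) unfolding lat_tri_def mem_lat_iff by blast
  have "dist a y = eps" "dist b y = eps"
    using assms(3) unfolding lat_tri_def by simp_all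
  then have "eisenstein_norm (y1 - a1) (y2 - a2) = 1"
    "eisenstein_norm ((y1 - a1) - p1) ((y2 - a2) - p2) = 1"
    unfolding abc y dist_lat_pt_eq_iff[OF assms(1)] by (simp_all add: algebra_simps)
  from unit_triangle_int_apex[OF Q(1) this Q(2,3)]
  have "(y1, y2) = (a1 + q1, a2 + q2) \<or> (y1, y2) = (a1 + p1 - q1, a2 + p2 - q2)"
    by auto
  moreover have "a + b - c = lat_pt eps (of_int (a1 + p1 - q1)) (of_int (a2 + p2 - q2))"
    unfolding abc by (simp add: lat_pt_add lat_pt_diff algebra_simps)
  ultimately show ?thesis
    unfolding y abc(3) by auto
qed

definition cross2 :: "real^2 \<Rightarrow> real^2 \<Rightarrow> real" where
  "cross2 x y = x $ 1 * y $ 2 - x $ 2 * y $ 1"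

lemma cross2_lat_tri_nonzero:
  assumes "eps > 0" "lat_tri eps a b c"
  shows "cross2 (b - a) (c - a) \<noteq> 0"
proof -
  obtain a1 a2 p1 p2 q1 q2 :: int where abc: "a = lat_pt eps a1 a2"
    "b = lat_pt eps (a1 + p1) (a2 + p2)" "c = lat_pt eps (a1 + q1) (a2 + q2)"
    and Q: "eisenstein_norm p1 p2 = 1" "eisenstein_norm q1 q2 = 1"
    "eisenstein_norm (q1 - p1) (q2 - p2) = 1"
    using lat_tri_coords[OF assms] .
  have "cross2 (b - a) (c - a) = eps ^ 2 * sqrt 3 / 2 * of_int (p1 * q2 - p2 * q1)"
    unfolding abc lat_pt_diff cross2_def by (simp add: power2_eq_square field_simps)
  moreover have "eps ^ 2 * sqrt 3 / 2 \<noteq> 0"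
    using assms(1) by simp
  moreover have "real_of_int (p1 * q2 - p2 * q1) \<noteq> 0"
    using unit_triangle_int_det_nonzero[OF Q] by (metis of_int_eq_0_iff)
  ultimately show ?thesis
    by (metis mult_eq_0_iff)
qed

lemma hull_lat_tri_inter_reflect:
  assumes "eps > 0" "lat_tri eps a b c"
  shows "convex hull {a, b, c} \<inter> convex hull {a, b, a + b - c} = closed_segment a b"
proof
  show "closed_segment a b \<subseteq> convex hull {a, b, c} \<inter> convex hull {a, b, a + b - c}"
    unfolding segment_convex_hull by (intro Int_greatest hull_mono) auto
next
  show "convex hull {a, b, c} \<inter> convex hull {a, b, a + b - c} \<subseteq> closed_segment a b"
  proof
    fix z assume z: "z \<in> convex hull {a, b, c} \<inter> convex hull {a, b, a + b - c}"
    obtain u v w where uvw: "0 \<le> u" "0 \<le> v" "0 \<le> w" "u + v + w = 1"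
      "z = u *\<^sub>R a + v *\<^sub>R b + w *\<^sub>R c"
      using z unfolding convex_hull_3 by blast
    obtain u' v' w' where uvw': "0 \<le> w'" "u' + v' + w' = 1"
      "z = u' *\<^sub>R a + v' *\<^sub>R b + w' *\<^sub>R (a + b - c)"
      using z unfolding convex_hull_3 by blast
    have u: "u = 1 - v - w" and u': "u' = 1 - v' - w'"
      using uvw(4) uvw'(2) by simp_all
    \<comment> \<open>the two triangles lie on opposite sides of the line through a and b\<close>
    have "cross2 (b - a) (z - a) = w * cross2 (b - a) (c - a)"
      unfolding uvw(5) u cross2_def by (simp add: algebra_simps)
    moreover have "cross2 (b - a) (z - a) = - w' * cross2 (b - a) (c - a)"
      unfolding uvw'(3) u' cross2_def by (simp add: algebra_simps)
    ultimately have "(w + w') * cross2 (b - a) (c - a) = 0"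
      by (simp add: algebra_simps)
    then have "w = 0"
      using cross2_lat_tri_nonzero[OF assms] uvw(3) uvw'(1) by simp
    then have "z = (1 - v) *\<^sub>R a + v *\<^sub>R b" "v \<le> 1"
      using uvw u by simp_all
    then show "z \<in> closed_segment a b"
      using uvw(2) unfolding closed_segment_def by blast
  qed
qed

lemma lat_tri_vertex_notin_reflect:
  assumes "eps > 0" "lat_tri eps a b c"
  shows "c \<notin> convex hull {a, b, a + b - c}"
proof
  assume "c \<in> convex hull {a, b, a + b - c}"
  moreover have "c \<in> convex hull {a, b, c}"
    by (rule hull_inc) simp
  ultimately have "c \<in> convex hull {a, b, c} \<inter> convex hull {a, b, a + b - c}"
    by (rule IntI[rotated])
  then have "c \<in> closed_segment a b"
    unfolding hull_lat_tri_inter_reflect[OF assms] .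
  then show False
    using lat_tri_vertex_notin_segment[OF assms] by simp
qed

section \<open>Points off the lattice lines\<close>

(* All edges of the triangulation lie on the lines where lat_s, lat_t or lat_s + lat_t is an
   integer, so a point off these lines lies in exactly one triangle. *)

definition off_lattice_lines :: "real \<Rightarrow> real^2 \<Rightarrow> bool" where
  "off_lattice_lines eps w \<longleftrightarrow>
     lat_s eps w \<notin> \<int> \<and> lat_t eps w \<notin> \<int> \<and> lat_s eps w + lat_t eps w \<notin> \<int>"

lemma tri_at_off_lattice_lines_point:
  assumes "eps > 0" "Y \<in> tri eps" "w \<in> Y" "off_lattice_lines eps w"
  defines "s \<equiv> lat_s eps w" and "t \<equiv> lat_t eps w"
  shows "Y = convex hull (if s + t < \<lfloor>s\<rfloor> + \<lfloor>t\<rfloor> + 1 then up_verts eps \<lfloor>s\<rfloor> \<lfloor>t\<rfloor>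
                          else down_verts eps \<lfloor>s\<rfloor> \<lfloor>t\<rfloor>)"
proof -
  obtain a b c where Y: "Y = convex hull {a, b, c}" "lat_tri eps a b c"
    using assms(2) mem_tri_iff by blast
  have s_t: "s \<noteq> of_int k" "t \<noteq> of_int k" "s + t \<noteq> of_int k" for k
    using assms(4) unfolding off_lattice_lines_def s_def t_def by (auto simp del: of_int_add)
  show ?thesis
  proof (cases rule: lat_tri_cases[OF assms(1) Y(2)])
    case (1 m n)
    have "m \<le> s" "n \<le> t" "s + t \<le> m + n + 1"
      using hull_up_verts_coords[OF assms(1), of w m n] assms(3) Y(1) 1
      unfolding s_def t_def by auto
    then have "m < s" "n < t" "s + t < m + n + 1"
      using s_t(1)[of m] s_t(2)[of n] s_t(3)[of "m + n + 1"] by force+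
    then have "\<lfloor>s\<rfloor> = m" "\<lfloor>t\<rfloor> = n"
      by (auto intro!: floor_unique)
    with \<open>s + t < m + n + 1\<close> show ?thesis
      using 1 Y(1) by simp
  next
    case (2 m n)
    have "s \<le> m + 1" "t \<le> n + 1" "m + n + 1 \<le> s + t"
      using hull_down_verts_coords[OF assms(1), of w m n] assms(3) Y(1) 2
      unfolding s_def t_def by auto
    then have "s < m + 1" "t < n + 1" "m + n + 1 < s + t"
      using s_t(1)[of "m + 1"] s_t(2)[of "n + 1"] s_t(3)[of "m + n + 1"] by force+
    then have "\<lfloor>s\<rfloor> = m" "\<lfloor>t\<rfloor> = n"
      by (auto intro!: floor_unique)
    with \<open>m + n + 1 < s + t\<close> show ?thesis
      using 2 Y(1) by simp
  qed
qed

lemma tri_eq_if_off_lattice_lines: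
  assumes "eps > 0" "Y \<in> tri eps" "Y' \<in> tri eps" "w \<in> Y" "w \<in> Y'" "off_lattice_lines eps w"
  shows "Y = Y'"
  using tri_at_off_lattice_lines_point[OF assms(1,2,4,6)]
    tri_at_off_lattice_lines_point[OF assms(1,3,5,6)] by simp

lemma strictly_between_not_Ints:
  fixes x :: real
  assumes "of_int m < x" "x < of_int m + 1"
  shows "x \<notin> \<int>"
proof
  assume "x \<in> \<int>"
  then obtain k where "x = of_int k"
    by (auto elim: Ints_cases)
  with assms show False
    by simp
qed

lemma convex_comb_strictly_between:
  fixes x c t lo hi :: real
  assumes "0 < t" "t \<le> 1" "lo \<le> x" "x \<le> hi" "lo < c" "c < hi"
  shows "lo < (1 - t) * x + t * c \<and> (1 - t) * x + t * c < hi"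
proof -
  have "0 \<le> (1 - t) * (x - lo)" "0 < t * (c - lo)" "0 \<le> (1 - t) * (hi - x)" "0 < t * (hi - c)"
    using assms by simp_all
  then show ?thesis
    by (simp add: algebra_simps)
qed

lemma convex_comb_not_Ints:
  fixes x c t :: real
  assumes "0 < t" "t \<le> 1" "of_int m \<le> x" "x \<le> of_int m + 1" "of_int m < c" "c < of_int m + 1"
  shows "(1 - t) * x + t * c \<notin> \<int>"
  using convex_comb_strictly_between[OF assms] strictly_between_not_Ints by blast

lemma tri_coord_box:
  assumes "eps > 0" "X \<in> tri eps"
  obtains g :: "real^2" and m n k :: int where "g \<in> X"
    "\<forall>z \<in> X. m \<le> lat_s eps z \<and> lat_s eps z \<le> of_int m + 1
       \<and> n \<le> lat_t eps z \<and> lat_t eps z \<le> of_int n + 1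
       \<and> k \<le> lat_s eps z + lat_t eps z \<and> lat_s eps z + lat_t eps z \<le> of_int k + 1"
    "m < lat_s eps g \<and> lat_s eps g < of_int m + 1
       \<and> n < lat_t eps g \<and> lat_t eps g < of_int n + 1
       \<and> k < lat_s eps g + lat_t eps g \<and> lat_s eps g + lat_t eps g < of_int k + 1"
proof -
  obtain a b c where X: "X = convex hull {a, b, c}" "lat_tri eps a b c"
    using assms(2) mem_tri_iff by blast
  show thesis
  proof (cases rule: lat_tri_cases[OF assms(1) X(2)])
    case (1 m n)
    let ?g = "(1/3) *\<^sub>R lat_pt eps m n + (1/3) *\<^sub>R lat_pt eps (m + 1) n
      + (1/3) *\<^sub>R lat_pt eps m (n + 1)"
    have "?g \<in> X"
      unfolding X(1) 1 up_verts_def convex_hull_3 by (intro CollectI exI[of _ "1/3"]) auto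
    moreover have "lat_s eps ?g = m + 1/3" "lat_t eps ?g = n + 1/3"
      using assms(1) by (simp_all add: field_simps)
    ultimately show thesis
      using that[of ?g m n "m + n"] hull_up_verts_coords[OF assms(1), of _ m n] X(1) 1 by fastforce
  next
    case (2 m n)
    let ?g = "(1/3) *\<^sub>R lat_pt eps (m + 1) n + (1/3) *\<^sub>R lat_pt eps m (n + 1)
      + (1/3) *\<^sub>R lat_pt eps (m + 1) (n + 1)"
    have "?g \<in> X"
      unfolding X(1) 2 down_verts_def convex_hull_3 by (intro CollectI exI[of _ "1/3"]) auto
    moreover have "lat_s eps ?g = m + 2/3" "lat_t eps ?g = n + 2/3"
      using assms(1) by (simp_all add: field_simps)
    ultimately show thesis
      using that[of ?g m n "m + n + 1"] hull_down_verts_coords[OF assms(1), of _ m n] X(1) 2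
      by fastforce
  qed
qed

lemma tri_centre_off_lattice_lines:
  assumes "eps > 0" "X \<in> tri eps"
  obtains g where "g \<in> X"
    "\<And>z t. z \<in> X \<Longrightarrow> 0 < t \<Longrightarrow> t \<le> 1 \<Longrightarrow> off_lattice_lines eps ((1 - t) *\<^sub>R z + t *\<^sub>R g)"
proof -
  obtain g :: "real^2" and m n k :: int where g: "g \<in> X"
    and box: "\<forall>z \<in> X. m \<le> lat_s eps z \<and> lat_s eps z \<le> of_int m + 1
       \<and> n \<le> lat_t eps z \<and> lat_t eps z \<le> of_int n + 1
       \<and> k \<le> lat_s eps z + lat_t eps z \<and> lat_s eps z + lat_t eps z \<le> of_int k + 1"
    and box_g: "m < lat_s eps g \<and> lat_s eps g < of_int m + 1
       \<and> n < lat_t eps g \<and> lat_t eps g < of_int n + 1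
       \<and> k < lat_s eps g + lat_t eps g \<and> lat_s eps g + lat_t eps g < of_int k + 1"
    using tri_coord_box[OF assms] .
  have "off_lattice_lines eps ((1 - t) *\<^sub>R z + t *\<^sub>R g)" if "z \<in> X" "0 < t" "t \<le> 1" for z t
  proof -
    let ?w = "(1 - t) *\<^sub>R z + t *\<^sub>R g"
    have "lat_s eps ?w = (1 - t) * lat_s eps z + t * lat_s eps g"
      "lat_t eps ?w = (1 - t) * lat_t eps z + t * lat_t eps g"
      "lat_s eps ?w + lat_t eps ?w
         = (1 - t) * (lat_s eps z + lat_t eps z) + t * (lat_s eps g + lat_t eps g)"
      by (simp_all add: algebra_simps)
    moreover have "(1 - t) * lat_s eps z + t * lat_s eps g \<notin> \<int>"
      using box[rule_format, OF that(1)] box_g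
      by (intro convex_comb_not_Ints[OF that(2,3), where m = m]) auto
    moreover have "(1 - t) * lat_t eps z + t * lat_t eps g \<notin> \<int>"
      using box[rule_format, OF that(1)] box_g
      by (intro convex_comb_not_Ints[OF that(2,3), where m = n]) auto
    moreover have "(1 - t) * (lat_s eps z + lat_t eps z) + t * (lat_s eps g + lat_t eps g) \<notin> \<int>"
      using box[rule_format, OF that(1)] box_g
      by (intro convex_comb_not_Ints[OF that(2,3), where m = k]) auto
    ultimately show ?thesis
      unfolding off_lattice_lines_def by simp
  qed
  with g that show thesis by blast
qed

lemma tri_mem_of_subset_Union:
  assumes "eps > 0" "X \<in> tri eps" "S \<subseteq> tri eps" "X \<subseteq> \<Union>S"
  shows "X \<in> S"
proof -
  obtain g where g: "g \<in> X" and off: "\<And>z t. z \<in> X \<Longrightarrow> 0 < t \<Longrightarrow> t \<le> 1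
      \<Longrightarrow> off_lattice_lines eps ((1 - t) *\<^sub>R z + t *\<^sub>R g)"
    using tri_centre_off_lattice_lines[OF assms(1,2)] by metis
  have "off_lattice_lines eps g"
    using off[OF g, of 1] by simp
  obtain Y where "Y \<in> S" "g \<in> Y"
    using assms(4) g by blast
  with g \<open>off_lattice_lines eps g\<close> assms show ?thesis
    using tri_eq_if_off_lattice_lines by blast
qed

lemma tri_mem_of_interior_Union:
  assumes "eps > 0" "X \<in> tri eps" "S \<subseteq> tri eps" "z \<in> X" "z \<in> interior (\<Union>S)"
  shows "X \<in> S"
proof -
  obtain g where g: "g \<in> X"
    and off: "\<And>t. 0 < t \<Longrightarrow> t \<le> 1 \<Longrightarrow> off_lattice_lines eps ((1 - t) *\<^sub>R z + t *\<^sub>R g)"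
    using tri_centre_off_lattice_lines[OF assms(1,2)] assms(4) by metis
  obtain r where r: "r > 0" "ball z r \<subseteq> \<Union>S"
    using assms(5) mem_interior by blast
  define t where "t = r / (r + dist z g)"
  have d: "0 < r + dist z g"
    using r(1) by (simp add: add_pos_nonneg)
  then have t: "0 < t" "t \<le> 1"
    unfolding t_def using r(1) by simp_all
  define w where "w = (1 - t) *\<^sub>R z + t *\<^sub>R g"
  have "dist z w = t * dist z g"
    unfolding w_def dist_norm using t(1)
    by (simp add: algebra_simps flip: scaleR_right_diff_distrib)
  also have "\<dots> < r"
    unfolding t_def using d mult_pos_pos[OF r(1) r(1)] by (simp add: field_simps)
  finally obtain Y where "Y \<in> S" "w \<in> Y"
    using r(2) by auto
  moreover have "w \<in> X"
    unfolding w_def using assms(2) assms(4) g t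
    by (intro convexD) (auto simp: mem_tri_iff)
  ultimately show ?thesis
    using tri_eq_if_off_lattice_lines[OF assms(1) _ assms(2) _ _ off[OF t]] assms(3)
    unfolding w_def by blast
qed

section \<open>Neighbouring triangles\<close>

lemma lat_tri_opposite_vertex:
  assumes "eps > 0" "lat_tri eps a b c" "i \<in> {a, b, c}" "j \<in> {a, b, c}" "i \<noteq> j"
  obtains k where "{i, j, k} = {a, b, c}" "lat_tri eps i j k"
proof -
  have "card {a, b, c} = 3"
    using lat_tri_distinct[OF assms(1,2)] by simp
  then have "card ({a, b, c} - {i, j}) = 1"
    using assms(3-5) by (simp add: card_Diff_subset)
  then obtain k where k: "{a, b, c} - {i, j} = {k}"
    by (rule card_1_singletonE)
  then have "{i, j, k} = {a, b, c}" "k \<noteq> i" "k \<noteq> j"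
    using assms(3,4) by blast+
  with that show thesis
    using lat_tri_perm[OF assms(2)] assms(5) by blast
qed

lemma closed_segment_subset_hull3:
  "x \<in> {a, b, c} \<Longrightarrow> y \<in> {a, b, c} \<Longrightarrow> closed_segment x y \<subseteq> convex hull {a, b, c}"
  by (intro closed_segment_subset_convex_hull hull_inc)

lemma lat_tri_edge_mem_Nedg:
  assumes "lat_tri eps a b c" "x \<in> {a, b, c}" "y \<in> {a, b, c}" "x \<noteq> y" "u x = - u y"
  shows "closed_segment x y \<in> Nedg eps u"
proof -
  have "x \<in> lat eps" "y \<in> lat eps" "dist x y = eps"
    using assms(1-4) unfolding lat_tri_def by (auto simp: dist_commute)
  with assms(5) show ?thesis
    unfolding Nedg_def by blast
qed

lemma Nedg_subset_lat_tri:
  assumes "eps > 0" "lat_tri eps a b c" "e \<in> Nedg eps u" "e \<subseteq> convex hull {a, b, c}"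
  obtains i j where "e = closed_segment i j" "i \<in> {a, b, c}" "j \<in> {a, b, c}" "i \<noteq> j"
    "u i = - u j"
proof -
  obtain i j where ij: "e = closed_segment i j" "i \<in> lat eps" "j \<in> lat eps" "dist i j = eps"
    "u i = - u j"
    using assms(3) unfolding Nedg_def by blast
  have "i \<in> convex hull {a, b, c}" "j \<in> convex hull {a, b, c}"
    using assms(4) ij(1) ends_in_segment by blast+
  then have "i \<in> {a, b, c}" "j \<in> {a, b, c}"
    using lat_mem_hull_lat_tri[OF assms(1,2)] ij(2,3) by blast+
  moreover have "i \<noteq> j"
    using ij(4) assms(1) by auto
  ultimately show thesis
    using that ij(1,5) by blast
qed

lemma neighbours_sym: "neighbours eps u X Y \<Longrightarrow> neighbours eps u Y X"
  unfolding neighbours_def by (simp add: Int_commute)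

lemma neighbour_of_lat_tri:
  assumes "eps > 0" "lat_tri eps a b c" "neighbours eps u (convex hull {a, b, c}) Y"
  obtains i j k where "{i, j, k} = {a, b, c}" "lat_tri eps i j k" "u i = - u j"
    "Y = convex hull {i, j, i + j - k}" "convex hull {a, b, c} \<inter> Y = closed_segment i j"
proof -
  let ?X = "convex hull {a, b, c}"
  have N: "?X \<inter> Y \<in> Nedg eps u" "Y \<in> tri eps"
    using assms(3) unfolding neighbours_def by auto
  obtain i j where ij: "?X \<inter> Y = closed_segment i j" "i \<in> {a, b, c}" "j \<in> {a, b, c}"
    "i \<noteq> j" "u i = - u j"
    using Nedg_subset_lat_tri[OF assms(1,2) N(1) Int_lower1] .
  obtain k where k: "{i, j, k} = {a, b, c}" "lat_tri eps i j k"
    using lat_tri_opposite_vertex[OF assms(1,2) ij(2-4)] .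
  obtain p q r where Y: "Y = convex hull {p, q, r}" "lat_tri eps p q r"
    using N(2) mem_tri_iff by blast
  have "i \<in> Y" "j \<in> Y"
    using ij(1) ends_in_segment[of i j] by auto
  moreover have "i \<in> lat eps" "j \<in> lat eps"
    using k(2) unfolding lat_tri_def by simp_all
  ultimately have "i \<in> {p, q, r}" "j \<in> {p, q, r}"
    using lat_mem_hull_lat_tri[OF assms(1) Y(2)] unfolding Y(1) by simp_all
  then obtain y where y: "{i, j, y} = {p, q, r}" "lat_tri eps i j y"
    using lat_tri_opposite_vertex[OF assms(1) Y(2) _ _ ij(4)] by blast
  have Y_ijy: "Y = convex hull {i, j, y}"
    using Y(1) y(1) by simp
  have "y \<noteq> k"
  proof
    assume "y = k"
    then have "?X = closed_segment i j"
      using ij(1) Y_ijy k(1) by simp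
    moreover have "k \<in> ?X"
      by (rule hull_inc) (use k(1) in blast)
    ultimately show False
      using lat_tri_vertex_notin_segment[OF assms(1) k(2)] by simp
  qed
  then have "Y = convex hull {i, j, i + j - k}"
    using lat_tri_common_edge[OF assms(1) k(2) y(2)] Y_ijy by simp
  from that[OF k ij(5) this] ij(1) show thesis
    by simp
qed

lemma neighbour_of_lat_tri_cases:
  assumes "eps > 0" "lat_tri eps a b c" "neighbours eps u (convex hull {a, b, c}) Y"
  shows "Y = convex hull {b, c, b + c - a} \<and> u b = - u c
       \<or> Y = convex hull {a, c, a + c - b} \<and> u a = - u c
       \<or> Y = convex hull {a, b, a + b - c} \<and> u a = - u b"
proof -
  obtain i j k where ijk: "{i, j, k} = {a, b, c}" "lat_tri eps i j k" "u i = - u j"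
    "Y = convex hull {i, j, i + j - k}" "convex hull {a, b, c} \<inter> Y = closed_segment i j"
    using neighbour_of_lat_tri[OF assms] .
  have "i \<in> {a, b, c}" "j \<in> {a, b, c}" "k \<in> {a, b, c}"
    using ijk(1) by blast+
  moreover have "i \<noteq> j" "j \<noteq> k" "i \<noteq> k"
    using lat_tri_distinct[OF assms(1) ijk(2)] by simp_all
  ultimately have "(i, j, k) \<in> {(b, c, a), (c, b, a), (a, c, b), (c, a, b), (a, b, c), (b, a, c)}"
    by auto
  then show ?thesis
    using ijk(3,4) by (elim insertE emptyE)
      (simp_all add: insert_commute[of c b] insert_commute[of c a] insert_commute[of b a]
        add.commute[of c b] add.commute[of c a] add.commute[of b a])
qed

section \<open>Graphs of maximum degree two\<close>

lemma relpowp_split_at_last_visit: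
  assumes "(G ^^ n) A Y" "Y \<noteq> A"
  shows "\<exists>A1 k. k < n \<and> G A A1 \<and> ((\<lambda>x y. G x y \<and> x \<noteq> A \<and> y \<noteq> A) ^^ k) A1 Y"
  using assms
proof (induction n arbitrary: Y)
  case 0
  then show ?case by simp
next
  case (Suc n)
  from Suc.prems(1) obtain X where X: "(G ^^ n) A X" "G X Y"
    by auto
  show ?case
  proof (cases "X = A")
    case True
    with X(2) Suc.prems(2) show ?thesis
      by (intro exI[of _ Y] exI[of _ 0]) simp
  next
    case False
    with Suc.IH[OF X(1)] obtain A1 k where "k < n" "G A A1"
      "((\<lambda>x y. G x y \<and> x \<noteq> A \<and> y \<noteq> A) ^^ k) A1 X"
      by blast
    with X(2) False Suc.prems(2) show ?thesis
      by (intro exI[of _ A1] exI[of _ "Suc k"]) auto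
  qed
qed

lemma no_three_ends_in_component:
  assumes sym: "\<And>x y. G x y \<Longrightarrow> G y x"
    and deg2: "\<And>x y1 y2 y3. G x y1 \<Longrightarrow> G x y2 \<Longrightarrow> G x y3 \<Longrightarrow> y1 = y2 \<or> y1 = y3 \<or> y2 = y3"
    and ends: "\<And>x y1 y2. x \<in> {A, B, C} \<Longrightarrow> G x y1 \<Longrightarrow> G x y2 \<Longrightarrow> y1 = y2"
    and "G\<^sup>*\<^sup>* A B" "G\<^sup>*\<^sup>* A C" "A \<noteq> B" "A \<noteq> C" "B \<noteq> C"
  shows False
proof -
  obtain n where "(G ^^ n) A B"
    using \<open>G\<^sup>*\<^sup>* A B\<close> unfolding rtranclp_power by blast
  then show False
    using assms
  proof (induction n arbitrary: G A B C rule: less_induct)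
    case (less n)
    \<comment> \<open>deleting A makes its unique neighbour A1 a third end, from which B and C are reached\<close>
    let ?G' = "\<lambda>x y. G x y \<and> x \<noteq> A \<and> y \<noteq> A"
    obtain A1 k where k: "k < n" "G A A1" "(?G' ^^ k) A1 B"
      using relpowp_split_at_last_visit[OF less.prems(1) not_sym[OF less.prems(7)]] by blast
    obtain m where "(G ^^ m) A C"
      using less.prems(6) unfolding rtranclp_power by blast
    from relpowp_split_at_last_visit[OF this not_sym[OF less.prems(8)]]
    obtain A2 k2 where A2: "G A A2" "(?G' ^^ k2) A2 C"
      by blast
    have "A2 = A1"
      using less.prems(4)[of A] k(2) A2(1) by blast
    then have A1C: "?G'\<^sup>*\<^sup>* A1 C"
      using A2(2) by (simp add: relpowp_imp_rtranclp)
    have A1B: "?G'\<^sup>*\<^sup>* A1 B"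
      using k(3) by (rule relpowp_imp_rtranclp)
    have no_exit: "\<not> ?G' x z" if "x \<in> {B, C}" "x = A1" for x z
      using less.prems(2)[OF k(2)] less.prems(4)[of x A z] that by blast
    have "A1 \<noteq> B"
    proof
      assume "A1 = B"
      from A1C have "\<exists>z. ?G' A1 z"
        by (cases rule: converse_rtranclpE) (use \<open>A1 = B\<close> less.prems(9) in auto)
      with no_exit[of B] \<open>A1 = B\<close> show False
        by blast
    qed
    moreover have "A1 \<noteq> C"
    proof
      assume "A1 = C"
      from A1B have "\<exists>z. ?G' A1 z"
        by (cases rule: converse_rtranclpE) (use \<open>A1 = C\<close> less.prems(9) in auto)
      with no_exit[of C] \<open>A1 = C\<close> show False
        by blast
    qed
    moreover have A1_end: "y1 = y2" if "?G' A1 y1" "?G' A1 y2" for y1 y2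
      using less.prems(3)[of A1 y1 y2 A] less.prems(2)[OF k(2)] that by blast
    ultimately have ends': "y1 = y2" if "x \<in> {A1, B, C}" "?G' x y1" "?G' x y2" for x y1 y2
      using that less.prems(4)[of x y1 y2] by blast
    show False
    proof (rule less.IH[OF k(1) k(3)])
      show "?G' y x" if "?G' x y" for x y
        using that less.prems(2) by blast
      show "y1 = y2 \<or> y1 = y3 \<or> y2 = y3" if "?G' x y1" "?G' x y2" "?G' x y3" for x y1 y2 y3
        using that less.prems(3)[of x y1 y2 y3] by blast
    qed (fact ends' A1B A1C \<open>A1 \<noteq> B\<close> \<open>A1 \<noteq> C\<close> less.prems(9))+
  qed
qed

section \<open>Spin fields on interpolation regions\<close>

lemma SF_neq_uminus:
  assumes "u \<in> SF eps \<Omega>" "i \<in> lat eps"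
  shows "u i \<noteq> - u i"
proof
  assume "u i = - u i"
  then have "2 *\<^sub>R u i = 0"
    by (metis scaleR_2 add.right_inverse)
  then show False
    using assms unfolding SF_def by auto
qed

lemma neighbours_at_most_two:
  assumes "eps > 0" "u \<in> SF eps \<Omega>"
    and "neighbours eps u X Y1" "neighbours eps u X Y2" "neighbours eps u X Y3"
  shows "Y1 = Y2 \<or> Y1 = Y3 \<or> Y2 = Y3"
proof (rule ccontr)
  assume distinct: "\<not> (Y1 = Y2 \<or> Y1 = Y3 \<or> Y2 = Y3)"
  obtain a b c where X: "X = convex hull {a, b, c}" "lat_tri eps a b c"
    using assms(3) unfolding neighbours_def mem_tri_iff by blast
  note cases = neighbour_of_lat_tri_cases[OF assms(1) X(2), of u]
  have "u a = - u b" "u a = - u c" "u b = - u c"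
    using cases[of Y1] cases[of Y2] cases[of Y3] assms(3-5) distinct unfolding X(1) by auto
  then have "u c = - u c"
    by simp
  moreover have "c \<in> lat eps"
    using X(2) unfolding lat_tri_def by simp
  ultimately show False
    using SF_neq_uminus[OF assms(2)] by blast
qed

definition jumps_pm :: "real \<Rightarrow> (real^2 \<Rightarrow> real^3) \<Rightarrow> real^3 \<Rightarrow> (real^2) set \<Rightarrow> bool" where
  "jumps_pm eps u p X \<longleftrightarrow> X \<in> tri eps \<and>
     (\<forall>i \<in> lat eps \<inter> X. \<forall>j \<in> lat eps \<inter> X. u i = - u j \<longrightarrow> u i = p \<or> u i = - p)"

lemma jumps_pm_neighbour:
  assumes "eps > 0" "u \<in> SF eps \<Omega>" "jumps_pm eps u p X" "neighbours eps u X Y"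
  shows "jumps_pm eps u p Y"
proof -
  obtain a b c where X: "X = convex hull {a, b, c}" "lat_tri eps a b c"
    using assms(3) unfolding jumps_pm_def mem_tri_iff by blast
  obtain i j k where ijk: "{i, j, k} = {a, b, c}" "lat_tri eps i j k" "u i = - u j"
    "Y = convex hull {i, j, i + j - k}" "X \<inter> Y = closed_segment i j"
    using neighbour_of_lat_tri[OF assms(1) X(2), of u Y] assms(4) unfolding X(1) by blast
  have "i \<in> lat eps \<inter> X" "j \<in> lat eps \<inter> X"
    using ijk(2,5) ends_in_segment[of i j] unfolding lat_tri_def by auto
  then have pm: "u i = p \<or> u i = - p" "u j = p \<or> u j = - p"
    using assms(3) ijk(3) unfolding jumps_pm_def by (metis minus_minus)+
  have lat_Y: "q \<in> {i, j, i + j - k}" if "q \<in> lat eps \<inter> Y" for q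
    using lat_mem_hull_lat_tri[OF assms(1) lat_tri_reflect[OF ijk(2)]] that ijk(4) by blast
  have "u q = p \<or> u q = - p" if "q \<in> lat eps \<inter> Y" "r \<in> lat eps \<inter> Y" "u q = - u r" for q r
  proof (cases "q = i + j - k")
    case True
    then have "r \<noteq> q"
      using that SF_neq_uminus[OF assms(2)] by auto
    then have "u r = p \<or> u r = - p"
      using lat_Y[OF that(2)] True pm by auto
    with that(3) show ?thesis
      by auto
  next
    case False
    with lat_Y[OF that(1)] pm show ?thesis
      by auto
  qed
  moreover have "Y \<in> tri eps"
    using assms(4) unfolding neighbours_def by simp
  ultimately show ?thesis
    unfolding jumps_pm_def by blast
qed

lemma jumps_pm_rtranclp:
  assumes "eps > 0" "u \<in> SF eps \<Omega>" "(neighbours eps u)\<^sup>*\<^sup>* X Y" "jumps_pm eps u p X"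
  shows "jumps_pm eps u p Y"
  using assms(3,4)
  by (induction rule: rtranclp_induct) (auto intro: jumps_pm_neighbour[OF assms(1,2)])

lemma neighbour_unique_if_vertex_off_pm:
  assumes "eps > 0" "jumps_pm eps u p X" "v \<in> lat eps \<inter> X" "u v \<noteq> p" "u v \<noteq> - p"
    and "neighbours eps u X Y1" "neighbours eps u X Y2"
  shows "Y1 = Y2"
proof -
  obtain a b c where X: "X = convex hull {a, b, c}" "lat_tri eps a b c"
    using assms(2) unfolding jumps_pm_def mem_tri_iff by blast
  have v: "v \<in> {a, b, c}"
    using lat_mem_hull_lat_tri[OF assms(1) X(2)] assms(3) X(1) by blast
  have "x \<in> lat eps \<inter> X" if "x \<in> {a, b, c}" for x
    using that X unfolding lat_tri_def by (auto intro: hull_inc)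
  then have pm: "u x = p \<or> u x = - p" if "x \<in> {a, b, c}" "y \<in> {a, b, c}" "u x = - u y" for x y
    using that assms(2) unfolding jumps_pm_def by blast
  \<comment> \<open>the common edge joins p to -p, so it is the edge opposite v\<close>
  have opposite_v: "Y = convex hull {b, c, b + c - a} \<and> v = a
      \<or> Y = convex hull {a, c, a + c - b} \<and> v = b
      \<or> Y = convex hull {a, b, a + b - c} \<and> v = c" if "neighbours eps u X Y" for Y
    using neighbour_of_lat_tri_cases[OF assms(1) X(2), of u Y] that v assms(4,5)
      pm[of a b] pm[of b a] pm[of a c] pm[of c a] pm[of b c] pm[of c b] unfolding X(1)
    by auto
  show ?thesis
    using opposite_v[OF assms(6)] opposite_v[OF assms(7)] lat_tri_distinct[OF assms(1) X(2)] by auto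
qed

lemma tri_with_single_Nedg:
  assumes "eps > 0" "T \<in> tri eps" "card {e \<in> Nedg eps u. e \<subseteq> T} = 1"
  obtains a b c where "T = convex hull {a, b, c}" "lat_tri eps a b c" "u a = - u b"
    "u c \<noteq> u a" "u c \<noteq> u b" "closed_segment b c \<notin> Nedg eps u" "closed_segment a c \<notin> Nedg eps u"
proof -
  obtain e0 where E: "{e \<in> Nedg eps u. e \<subseteq> T} = {e0}"
    using assms(3) card_1_singletonE by blast
  obtain a0 b0 c0 where T0: "T = convex hull {a0, b0, c0}" "lat_tri eps a0 b0 c0"
    using assms(2) mem_tri_iff by blast
  obtain i j where ij: "e0 = closed_segment i j" "i \<in> {a0, b0, c0}" "j \<in> {a0, b0, c0}" "i \<noteq> j"
    "u i = - u j"
    using Nedg_subset_lat_tri[OF assms(1) T0(2), of e0 u] E unfolding T0(1) by blast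
  obtain k where k: "{i, j, k} = {a0, b0, c0}" "lat_tri eps i j k"
    using lat_tri_opposite_vertex[OF assms(1) T0(2) ij(2-4)] .
  have T: "T = convex hull {i, j, k}"
    using T0(1) k(1) by simp
  have ijk: "i \<noteq> j" "j \<noteq> k" "i \<noteq> k"
    using lat_tri_distinct[OF assms(1) k(2)] by simp_all
  have not_N: "closed_segment x k \<notin> Nedg eps u" if "x \<in> {i, j}" for x
  proof
    assume "closed_segment x k \<in> Nedg eps u"
    moreover have "closed_segment x k \<subseteq> T"
      unfolding T using that by (intro closed_segment_subset_hull3) auto
    ultimately have "closed_segment x k = closed_segment i j"
      using E ij(1) by blast
    with that ijk show False
      by (auto simp: doubleton_eq_iff)
  qed
  have "u k \<noteq> u i"
  proof
    assume "u k = u i"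
    then have "closed_segment j k \<in> Nedg eps u"
      using lat_tri_edge_mem_Nedg[OF k(2), of j k] ij(5) ijk by simp
    with not_N[of j] show False by simp
  qed
  moreover have "u k \<noteq> u j"
  proof
    assume "u k = u j"
    then have "closed_segment i k \<in> Nedg eps u"
      using lat_tri_edge_mem_Nedg[OF k(2), of i k] ij(5) ijk by simp
    with not_N[of i] show False by simp
  qed
  ultimately show thesis
    using that[OF T k(2) ij(5)] not_N by blast
qed

lemma bdry_edge_if_reflection_notin:
  assumes "eps > 0" "lat_tri eps a b c" "closed_segment b c \<notin> Nedg eps u"
    and "S \<subseteq> tri eps" "convex hull {a, b, c} \<subseteq> \<Union>S" "convex hull {b, c, b + c - a} \<notin> S"
  shows "bdry_edge eps u (\<Union>S) (closed_segment b c)"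
proof -
  have bca: "lat_tri eps b c a"
    using lat_tri_rotate[OF assms(2)] .
  have "closed_segment b c \<in> edg eps"
    using assms(2) unfolding lat_tri_def edg_def by blast
  then have "closed_segment b c \<in> Cedg eps u"
    using assms(3) unfolding Cedg_def by blast
  moreover have "convex hull {a, b, c} \<in> tri eps" "convex hull {b, c, b + c - a} \<in> tri eps"
    using assms(2) lat_tri_reflect[OF bca] unfolding mem_tri_iff by blast+
  moreover have "convex hull {b, c, b + c - a} \<subseteq> - interior (\<Union>S)"
    using tri_mem_of_interior_Union[OF assms(1) _ assms(4)] assms(6) calculation(3) by blast
  moreover have "convex hull {a, b, c} \<inter> convex hull {b, c, b + c - a} = closed_segment b c"
    using hull_lat_tri_inter_reflect[OF assms(1) bca] by (simp add: insert_commute)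
  ultimately show ?thesis
    unfolding bdry_edge_def using assms(5) by blast
qed

context
  fixes eps :: real and \<Omega> :: "(real^2) set" and u :: "real^2 \<Rightarrow> real^3"
    and a b c :: "real^2" and S :: "(real^2) set set"
  assumes eps: "eps > 0" and u: "u \<in> SF eps \<Omega>" and abc: "lat_tri eps a b c"
    and ab: "u a = - u b" and ca: "u c \<noteq> u a" and cb: "u c \<noteq> u b"
    and S: "pw_connected eps u S" and T: "convex hull {a, b, c} \<in> S"
begin

lemma region_reachable: "Y \<in> S \<Longrightarrow> (neighbours eps u)\<^sup>*\<^sup>* (convex hull {a, b, c}) Y"
  using S T unfolding pw_connected_def tconnected_def by blast

lemma region_jumps_pm: "Y \<in> S \<Longrightarrow> jumps_pm eps u (u a) Y"
proof (rule jumps_pm_rtranclp[OF eps u region_reachable])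
  have "i \<noteq> c" if "i \<in> {a, b, c}" "u i = - u j" "j \<in> {a, b, c}" for i j
    using that ab ca cb SF_neq_uminus[OF u, of c] abc unfolding lat_tri_def by auto
  then have "u i = u a \<or> u i = - u a" if "i \<in> lat eps \<inter> convex hull {a, b, c}"
      "j \<in> lat eps \<inter> convex hull {a, b, c}" "u i = - u j" for i j
    using that lat_mem_hull_lat_tri[OF eps abc] ab by (metis IntD1 IntD2 insert_iff singletonD
        minus_minus)
  then show "jumps_pm eps u (u a) (convex hull {a, b, c})"
    using S T unfolding jumps_pm_def pw_connected_def by blast
qed

lemma region_no_three_ends:
  assumes "Y1 \<in> S" "Y2 \<in> S" "Y1 \<noteq> convex hull {a, b, c}" "Y2 \<noteq> convex hull {a, b, c}" "Y1 \<noteq> Y2"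
    and "v1 \<in> lat eps \<inter> Y1" "u v1 \<notin> {u a, u b}" "v2 \<in> lat eps \<inter> Y2" "u v2 \<notin> {u a, u b}"
  shows False
proof (rule no_three_ends_in_component)
  have "c \<in> lat eps \<inter> convex hull {a, b, c}"
    using abc unfolding lat_tri_def by (auto intro: hull_inc)
  then show "y1 = y2" if "x \<in> {convex hull {a, b, c}, Y1, Y2}" "neighbours eps u x y1"
    "neighbours eps u x y2" for x y1 y2
    using that assms(1,2,6-9) T ca cb ab
      neighbour_unique_if_vertex_off_pm[OF eps region_jumps_pm] by auto
qed (use assms(1-5) region_reachable neighbours_sym neighbours_at_most_two[OF eps u] in auto)

lemma reflections_not_both_in_region:
  "\<not> (convex hull {b, c, b + c - a} \<in> S \<and> convex hull {a, c, a + c - b} \<in> S)"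
proof
  assume in_S: "convex hull {b, c, b + c - a} \<in> S \<and> convex hull {a, c, a + c - b} \<in> S"
  have "a \<notin> convex hull {b, c, b + c - a}" "b \<notin> convex hull {a, c, a + c - b}"
    using lat_tri_vertex_notin_reflect[OF eps] lat_tri_rotate[OF abc]
      lat_tri_rotate[OF lat_tri_commute[OF abc]] by blast+
  moreover have "a \<in> convex hull {a, b, c}" "b \<in> convex hull {a, b, c}"
    "a \<in> convex hull {a, c, a + c - b}" "c \<in> convex hull {b, c, b + c - a}"
    "c \<in> convex hull {a, c, a + c - b}"
    by (auto intro: hull_inc)
  moreover have "c \<in> lat eps"
    using abc unfolding lat_tri_def by simp
  ultimately show False
    using region_no_three_ends[of "convex hull {b, c, b + c - a}" "convex hull {a, c, a + c - b}"
        c c] in_S ca cb by blast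
qed

lemma values_in_region_if_reflection_in:
  assumes in_S: "convex hull {b, c, b + c - a} \<in> S"
  shows "u ` (lat eps \<inter> \<Union>S) \<subseteq> {u a, u b, u c}"
proof -
  let ?T = "convex hull {a, b, c}" and ?Ta = "convex hull {b, c, b + c - a}"
  have bcd: "lat_tri eps b c (b + c - a)"
    using lat_tri_reflect[OF lat_tri_rotate[OF abc]] .
  have "a \<notin> ?Ta"
    using lat_tri_vertex_notin_reflect[OF eps lat_tri_rotate[OF abc]] .
  then have T_ne: "?Ta \<noteq> ?T"
    by (auto intro: hull_inc)
  obtain W where "neighbours eps u W ?Ta"
    using region_reachable[OF in_S] T_ne by (metis rtranclp.cases)
  then have W: "neighbours eps u ?Ta W"
    by (rule neighbours_sym)
  have c_Ta: "c \<in> lat eps \<inter> ?Ta" and d_Ta: "b + c - a \<in> lat eps \<inter> ?Ta"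
    using bcd unfolding lat_tri_def by (auto intro: hull_inc)
  have c_flip: "u c \<noteq> - u j" if "j \<in> lat eps \<inter> ?Ta" for j
  proof
    assume "u c = - u j"
    then have "u c = u a \<or> u c = - u a"
      using region_jumps_pm[OF in_S] c_Ta that unfolding jumps_pm_def by blast
    with ca cb ab show False
      by auto
  qed
  \<comment> \<open>the common edge of ?Ta and W avoids c, hence joins b to the new vertex\<close>
  have d: "u (b + c - a) = u a"
    using neighbour_of_lat_tri_cases[OF eps bcd W] c_flip[OF d_Ta] ab ca by auto
  show ?thesis
  proof
    fix x assume "x \<in> u ` (lat eps \<inter> \<Union>S)"
    then obtain z Y where z: "x = u z" "z \<in> lat eps" "z \<in> Y" "Y \<in> S"
      by blast
    show "x \<in> {u a, u b, u c}"
    proof (rule ccontr)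
      assume x: "x \<notin> {u a, u b, u c}"
      have "Y \<noteq> ?T"
        using lat_mem_hull_lat_tri[OF eps abc z(2)] z(1,3) x by auto
      moreover have "Y \<noteq> ?Ta"
        using lat_mem_hull_lat_tri[OF eps bcd z(2)] z(1,3) x d by auto
      ultimately show False
        using region_no_three_ends[OF in_S z(4) T_ne, of c z] c_Ta z x ca cb by auto
    qed
  qed
qed

lemma reflection_notin_region_if_four_values:
  assumes "card (u ` (lat eps \<inter> \<Union>S)) = 4"
  shows "convex hull {b, c, b + c - a} \<notin> S"
proof
  assume "convex hull {b, c, b + c - a} \<in> S"
  then have "card (u ` (lat eps \<inter> \<Union>S)) \<le> card {u a, u b, u c}"
    by (intro card_mono values_in_region_if_reflection_in) simp_all
  also have "\<dots> \<le> 3"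
    by (simp add: card_insert_if)
  finally show False
    using assms by simp
qed

end

lemma single_Nedg_tri_bdry_edges:
  assumes "eps > 0" "u \<in> SF eps \<Omega>" "pw_connected eps u S" "T \<in> S"
    and "card {e \<in> Nedg eps u. e \<subseteq> T} = 1"
  shows "\<exists>e. bdry_edge eps u (\<Union>S) e \<and> e \<subseteq> T"
    and "card (u ` (lat eps \<inter> \<Union>S)) = 4 \<Longrightarrow> \<exists>e1 e2. e1 \<noteq> e2
      \<and> bdry_edge eps u (\<Union>S) e1 \<and> e1 \<subseteq> T \<and> bdry_edge eps u (\<Union>S) e2 \<and> e2 \<subseteq> T"
proof -
  have S_tri: "S \<subseteq> tri eps"
    using assms(3) unfolding pw_connected_def by simp
  obtain a b c where T: "T = convex hull {a, b, c}" and abc: "lat_tri eps a b c"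
    and u_abc: "u a = - u b" "u c \<noteq> u a" "u c \<noteq> u b"
    and C: "closed_segment b c \<notin> Nedg eps u" "closed_segment a c \<notin> Nedg eps u"
    using tri_with_single_Nedg[OF assms(1) _ assms(5)] S_tri assms(4) by blast
  have T': "T = convex hull {b, a, c}" and u_bac: "u b = - u a"
    using T u_abc(1) by (simp_all add: insert_commute)
  note bac = lat_tri_commute[OF abc]
  have sub: "closed_segment b c \<subseteq> T" "closed_segment a c \<subseteq> T"
    unfolding T by (simp_all add: closed_segment_subset_hull3)
  have bc: "convex hull {b, c, b + c - a} \<notin> S \<Longrightarrow> bdry_edge eps u (\<Union>S) (closed_segment b c)"
    and ac: "convex hull {a, c, a + c - b} \<notin> S \<Longrightarrow> bdry_edge eps u (\<Union>S) (closed_segment a c)"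
    using bdry_edge_if_reflection_notin[OF assms(1) abc C(1) S_tri]
      bdry_edge_if_reflection_notin[OF assms(1) bac C(2) S_tri] T T' assms(4) by auto
  have "\<not> (convex hull {b, c, b + c - a} \<in> S \<and> convex hull {a, c, a + c - b} \<in> S)"
    using reflections_not_both_in_region[OF assms(1,2) abc u_abc assms(3)] T assms(4) by simp
  with bc ac sub show "\<exists>e. bdry_edge eps u (\<Union>S) e \<and> e \<subseteq> T"
    by blast
  assume "card (u ` (lat eps \<inter> \<Union>S)) = 4"
  then have "convex hull {b, c, b + c - a} \<notin> S" "convex hull {a, c, a + c - b} \<notin> S"
    using reflection_notin_region_if_four_values[OF assms(1,2) abc u_abc assms(3)]
      reflection_notin_region_if_four_values[OF assms(1,2) bac u_bac u_abc(3,2) assms(3)]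
      T T' assms(4) by auto
  moreover have "closed_segment b c \<noteq> closed_segment a c"
    using lat_tri_distinct[OF assms(1) abc] by (auto simp: doubleton_eq_iff)
  ultimately show "\<exists>e1 e2. e1 \<noteq> e2
      \<and> bdry_edge eps u (\<Union>S) e1 \<and> e1 \<subseteq> T \<and> bdry_edge eps u (\<Union>S) e2 \<and> e2 \<subseteq> T"
    using bc ac sub by blast
qed

theorem lemma5p4:
  fixes eps :: real and \<Omega> :: "(real^2) set" and u :: "real^2 \<Rightarrow> real^3"
    and R T :: "(real^2) set"
  assumes "eps > 0" and "bounded \<Omega>" and "open \<Omega>"
    and "u \<in> SF eps \<Omega>" and "R \<in> regions eps u"
    and "T \<in> tri eps" and "T \<subseteq> R"
  shows "(card {e \<in> Nedg eps u. e \<subseteq> T} = 1 \<longrightarrow> (\<exists>e. bdry_edge eps u R e \<and> e \<subseteq> T))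
       \<and> (card {e \<in> Nedg eps u. e \<subseteq> T} = 1 \<and> card (u ` (lat eps \<inter> R)) = 4
            \<longrightarrow> (\<exists>e1 e2. e1 \<noteq> e2 \<and> bdry_edge eps u R e1 \<and> e1 \<subseteq> T
                        \<and> bdry_edge eps u R e2 \<and> e2 \<subseteq> T))"
proof -
  obtain S where S: "pw_connected eps u S" and R: "R = \<Union>S"
    using assms(5) unfolding regions_def by blast
  have "T \<in> S"
    using tri_mem_of_subset_Union[OF assms(1,6)] S assms(7) R unfolding pw_connected_def by simp
  then show ?thesis
    using single_Nedg_tri_bdry_edges[OF assms(1,4) S] R by blast
qed

end
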